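(* Suppose Assumptions (A1) and (A2) hold. For every nonempty $\mathscr{S}\in\mathcal{A}(k)$ there exists a constant $C(\mathscr{S})$ such that, whenever $C>C(\mathscr{S})$, $$\inf_{T\in\mathcal{T}^{1/2}_{\mathscr{S}}}\sup_{\tau\in\mathrm{Lip}_C(\mathbb{R}^d)}\mathcal{R}(T,\mathscr{S},\tau)\le \frac{B}{\#\mathcal{S}_P}\sum_{s\in\mathscr{S}\cap\mathcal{S}_P}\sigma_s+\frac{C}{2}\,\frac{1}{\#\mathcal{S}_P}\sum_{s\in\mathcal{S}_P\setminus\mathscr{S}}\|X_s-X_{N_{\mathscr{S}}(s)}\|.$$
   Context: Sites are indexed by $\mathcal{S}=\{1,\dots,S\}$. $\mathcal{S}_E\subseteq\mathcal{S}$ (experimental sites) has $\mathrm{card}(\mathcal{S}_E)\ge 2$, and $\mathcal{S}_P\subseteq\mathcal{S}$ (policy sites) is nonempty, with $\#\mathcal{S}_P=\mathrm{card}(\mathcal{S}_P)$. Each site $s$ has a covariate vector $X_s\in\mathbb{R}^d$ and a known standard deviation $\sigma_s>0$. $\|\cdot\|$ is the Euclidean norm, and $\mathrm{Lip}_C(\mathbb{R}^d)$ is the set of functions $\tau:\mathbb{R}^d\to\mathbb{R}$ with $|\tau(x)-\tau(x')|\le C\|x-x'\|$ for all $x,x'$, where $C>0$. (A1): the true conditional treatment effect function $\tau$ lies in $\mathrm{Lip}_C(\mathbb{R}^d)$. (A2): $X_s\neq X_{s'}$ for all $s\neq s'$ in $\mathcal{S}$. Fix an integer $1\le k<\mathrm{card}(\mathcal{S}_E)$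 and set $\mathcal{A}(k)=\{\mathscr{S}\subset\mathcal{S}_E:\mathrm{card}(\mathscr{S})\le k\}$. For a nonempty $\mathscr{S}$ with elements $\mathscr{S}_1<\dots<\mathscr{S}_m$, the data are $\hat\tau_{\mathscr{S}}\sim\mathcal{N}_m(\tau_{\mathscr{S}},\Sigma_{\mathscr{S}})$, where $\tau_{\mathscr{S}}=(\tau(X_{\mathscr{S}_1}),\dots,\tau(X_{\mathscr{S}_m}))^\top$ and $\Sigma_{\mathscr{S}}=\mathrm{diag}(\sigma^2_{\mathscr{S}_1},\dots,\sigma^2_{\mathscr{S}_m})$. A treatment rule is a measurable map $T:\mathbb{R}^m\to[0,1]^{\#\mathcal{S}_P}$ with components $T_s$, $s\in\mathcal{S}_P$. $\mathcal{T}^{1/2}_{\mathscr{S}}$ is the set of treatment rules with $\mathbb{E}[T_s(U)]=1/2$ for all $s\in\mathcal{S}_P$ whenever $U\sim\mathcal{N}_m(0,\Sigma)$, for every positive definite diagonal $\Sigma$. Regret is $\mathcal{R}(T,\mathscr{S},\tau)=\frac{1}{\#\mathcal{S}_P}\sum_{s\in\mathcal{S}_P}\tau(X_s)\big(\mathbf{1}\{\tau(X_s)\ge0\}-\mathbb{E}_{\tau_{\mathscr{S}}}[T_s(\hat\tau_{\mathscr{S}})]\big)$. $N_{\mathscr{S}}(s)$ is the nearest neighbor of $s$ in $\mathscr{S}$ in Euclidean distance of covariates, with the smallest index chosen under ties. $B=\arg\max_{z\ge0}z\,\Phi(-z)$, where $\Phi$ is the standard normal CDF. *)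

theory Defs
  imports "HOL-Probability.Probability"
begin

definition Lip :: "real \<Rightarrow> ('a::euclidean_space \<Rightarrow> real) set" where
  "Lip C = {\<tau>. \<forall>x x'. \<bar>\<tau> x - \<tau> x'\<bar> \<le> C * norm (x - x')}"

definition Phi :: "real \<Rightarrow> real" where
  "Phi z = measure (density lborel std_normal_density) {..z}"

definition B_const :: real where
  "B_const = (THE z. z \<ge> 0 \<and> (\<forall>y\<ge>0. y * Phi (- y) \<le> z * Phi (- z)))"

definition nn :: "(nat \<Rightarrow> 'a::euclidean_space) \<Rightarrow> nat set \<Rightarrow> nat \<Rightarrow> nat" where
  "nn X Sc s = (LEAST j. j \<in> Sc \<and> (\<forall>i\<in>Sc. norm (X s - X j) \<le> norm (X s - X i)))"

definition gauss_vec :: "nat set \<Rightarrow> (nat \<Rightarrow> real) \<Rightarrow> (nat \<Rightarrow> real) \<Rightarrow> (nat \<Rightarrow> real) measure" where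
  "gauss_vec Sc mu sd = PiM Sc (\<lambda>s. density lborel (normal_density (mu s) (sd s)))"

definition half_rules :: "nat set \<Rightarrow> nat set \<Rightarrow> ((nat \<Rightarrow> real) \<Rightarrow> nat \<Rightarrow> real) set" where
  "half_rules SP Sc = {T.
     (\<forall>s\<in>SP. (\<lambda>u. T u s) \<in> borel_measurable (PiM Sc (\<lambda>_. borel))) \<and>
     (\<forall>s\<in>SP. \<forall>u. 0 \<le> T u s \<and> T u s \<le> 1) \<and>
     (\<forall>sd. (\<forall>i\<in>Sc. sd i > 0) \<longrightarrow>
        (\<forall>s\<in>SP. (\<integral>u. T u s \<partial>(gauss_vec Sc (\<lambda>_. 0) sd)) = 1/2))}"

definition regret :: "nat set \<Rightarrow> (nat \<Rightarrow> 'a::euclidean_space) \<Rightarrow> (nat \<Rightarrow> real)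
     \<Rightarrow> ((nat \<Rightarrow> real) \<Rightarrow> nat \<Rightarrow> real) \<Rightarrow> nat set \<Rightarrow> ('a \<Rightarrow> real) \<Rightarrow> real" where
  "regret SP X \<sigma> T Sc \<tau> = (1 / real (card SP)) *
     (\<Sum>s\<in>SP. \<tau> (X s) * ((if \<tau> (X s) \<ge> 0 then 1 else 0)
        - (\<integral>u. T u s \<partial>(gauss_vec Sc (\<lambda>i. \<tau> (X i)) \<sigma>))))"

end

theory Submission
  imports Defs "HOL-Real_Asymp.Real_Asymp"
begin

text \<open>
  The bound is attained by a single rule. At an experimental site it treats exactly when the
  estimate is nonnegative; with z = |tau(X_s)| / sigma_s its regret is
  sigma_s z Phi(-z) <= B sigma_s. At a policy site outside the experiment it thresholds the
  estimate at the nearest experimental site j after adding independent Gaussian noise, so that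
  it treats with probability Phi(tau(X_j) / r) for any prescribed scale r > sigma_j; a large
  Lipschitz constant C makes the scale we want exceed sigma_j. Lipschitz continuity gives
  |tau(X_s) - tau(X_j)| <= L = C |X_s - X_j|, and for r = 2L / sqrt(2 pi) the bounds
  1/2 + x / (sqrt(2 pi) + 2x) <= Phi x <= 1/2 + x / sqrt(2 pi) (x >= 0) show that such a site
  contributes at most L/2. Under centred data every component of the rule has mean
  Phi 0 = 1/2, so the rule is admissible.
\<close>

section \<open>The normal distribution\<close>

abbreviation normal_measure :: "real \<Rightarrow> real \<Rightarrow> real measure" where
  "normal_measure \<mu> \<sigma> \<equiv> density lborel (normal_density \<mu> \<sigma>)"

lemma prob_space_normal_measure: "0 < \<sigma> \<Longrightarrow> prob_space (normal_measure \<mu> \<sigma>)"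
  by (rule prob_space_normal_density)

lemma distr_normal_measure_affine:
  assumes "0 < \<sigma>" "\<alpha> \<noteq> 0"
  shows "distr (normal_measure \<mu> \<sigma>) lborel (\<lambda>x. \<beta> + \<alpha> * x)
       = normal_measure (\<beta> + \<alpha> * \<mu>) (\<bar>\<alpha>\<bar> * \<sigma>)"
proof -
  interpret prob_space "normal_measure \<mu> \<sigma>"
    using prob_space_normal_measure[OF assms(1)] .
  have "distributed (normal_measure \<mu> \<sigma>) lborel (\<lambda>x. x) (normal_density \<mu> \<sigma>)"
    by (auto simp: distributed_def distr_id2 intro!: measurable_ident_sets)
  then have "distributed (normal_measure \<mu> \<sigma>) lborel (\<lambda>x. \<beta> + \<alpha> * x)
      (normal_density (\<beta> + \<alpha> * \<mu>) (\<bar>\<alpha>\<bar> * \<sigma>))"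
    using assms by (rule normal_density_affine)
  then show ?thesis
    by (rule distributed_distr_eq_density)
qed

interpretation std_normal: real_distribution "normal_measure 0 1"
  by (rule real_dist_normal_dist)

lemma Phi_eq_cdf: "Phi = cdf (normal_measure 0 1)"
  by (auto simp: Phi_def cdf_def2)

lemma Phi_nonneg: "0 \<le> Phi x" and Phi_le_1: "Phi x \<le> 1"
  by (auto simp: Phi_eq_cdf std_normal.cdf_nonneg std_normal.cdf_bounded_prob)

lemma Phi_lim_at_top: "(Phi \<longlongrightarrow> 1) at_top"
  by (simp add: Phi_eq_cdf std_normal.cdf_lim_at_top_prob)

lemma emeasure_normal_measure_singleton: "emeasure (normal_measure \<mu> \<sigma>) {x} = 0"
  by (subst emeasure_density) (auto intro!: nn_integral_null_set)

lemma measure_normal_measure_atMost: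
  "0 < \<sigma> \<Longrightarrow> measure (normal_measure \<mu> \<sigma>) {..t} = Phi ((t - \<mu>) / \<sigma>)"
proof -
  assume "0 < \<sigma>"
  then have "normal_measure \<mu> \<sigma> = distr (normal_measure 0 1) lborel (\<lambda>x. \<mu> + \<sigma> * x)"
    using distr_normal_measure_affine[of 1 \<sigma> 0 \<mu>] by simp
  with \<open>0 < \<sigma>\<close> show ?thesis
    by (auto simp: Phi_def measure_distr field_simps intro!: arg_cong2[where f = measure])
qed

lemma measure_normal_measure_lessThan:
  assumes "0 < \<sigma>"
  shows "measure (normal_measure \<mu> \<sigma>) {..<t} = Phi ((t - \<mu>) / \<sigma>)"
proof -
  interpret prob_space "normal_measure \<mu> \<sigma>"
    using prob_space_normal_measure[OF assms] .
  have "measure (normal_measure \<mu> \<sigma>) {..t} = prob ({..<t} \<union> {t})"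
    by (auto intro!: arg_cong2[where f = measure])
  also have "\<dots> = prob {..<t} + prob {t}"
    by (intro finite_measure_Union) auto
  also have "prob {t} = 0"
    using emeasure_normal_measure_singleton[of \<mu> \<sigma> t] by (simp add: emeasure_eq_measure)
  finally have "measure (normal_measure \<mu> \<sigma>) {..t} = prob {..<t}" by simp
  with measure_normal_measure_atMost[OF assms] show ?thesis by simp
qed

lemma measure_normal_measure_atLeast:
  assumes "0 < \<sigma>"
  shows "measure (normal_measure \<mu> \<sigma>) {t..} = 1 - Phi ((t - \<mu>) / \<sigma>)"
proof -
  interpret prob_space "normal_measure \<mu> \<sigma>"
    using prob_space_normal_measure[OF assms] .
  have "{t..} = space (normal_measure \<mu> \<sigma>) - {..<t}" by auto
  then show ?thesis
    using prob_compl[of "{..<t}"] measure_normal_measure_lessThan[OF assms] by simp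
qed

lemma Phi_minus: "Phi (- x) = 1 - Phi x"
proof -
  have "Phi (- x) = measure (distr (normal_measure 0 1) lborel uminus) {..- x}"
    using distr_normal_measure_affine[of 1 "-1" 0 0] by (simp add: Phi_def)
  also have "\<dots> = measure (normal_measure 0 1) {x..}"
    by (subst measure_distr) (auto intro!: arg_cong2[where f = measure])
  finally show ?thesis
    by (simp add: measure_normal_measure_atLeast)
qed

lemma Phi_0: "Phi 0 = 1/2"
  using Phi_minus[of 0] by simp

lemma Phi_eq_interval_integral: "Phi x = (LBINT y=-\<infinity>..ereal x. std_normal_density y)"
proof -
  have "emeasure (normal_measure 0 1) {..<x}
      = (\<integral>\<^sup>+y. ennreal (std_normal_density y * indicator {..<x} y) \<partial>lborel)"
    by (subst emeasure_density) (auto intro!: nn_integral_cong simp: indicator_def)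
  also have "\<dots> = ennreal (\<integral>y. std_normal_density y * indicator {..<x} y \<partial>lborel)"
    by (rule nn_integral_eq_integral) (auto intro: integrable_real_mult_indicator)
  finally have "measure (normal_measure 0 1) {..<x} = (\<integral>y. std_normal_density y * indicator {..<x} y \<partial>lborel)"
    by (simp add: std_normal.emeasure_eq_measure)
  then show ?thesis
    using measure_normal_measure_lessThan[of 1 0 x]
    by (simp add: interval_lebesgue_integral_def set_lebesgue_integral_def mult.commute)
qed

lemma continuous_on_std_normal_density: "continuous_on A std_normal_density"
  unfolding normal_density_def by (intro continuous_intros) auto

lemma Phi_has_real_derivative: "(Phi has_real_derivative std_normal_density x) (at x)"
proof -
  define c where "c = x - 1"
  have split: "Phi u = (LBINT y=-\<infinity>..ereal c. std_normal_density y) + (LBINT y=c..u. std_normal_density y)" for u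
    unfolding Phi_eq_interval_integral
    by (rule interval_integral_sum[symmetric])
       (auto simp: interval_lebesgue_integrable_def set_integrable_def
          mult.commute[of "indicator _ _"] intro!: integrable_real_mult_indicator)
  have "((\<lambda>u. LBINT y=c..u. std_normal_density y) has_vector_derivative std_normal_density x)
      (at x within {x - 1..x + 1})"
    unfolding c_def by (rule interval_integral_FTC2) (auto intro: continuous_on_std_normal_density)
  then have "((\<lambda>u. LBINT y=c..u. std_normal_density y) has_vector_derivative std_normal_density x)
      (at x within {x - 1<..<x + 1})"
    by (rule has_vector_derivative_within_subset) auto
  then have "((\<lambda>u. LBINT y=c..u. std_normal_density y) has_vector_derivative std_normal_density x) (at x)"
    by (subst (asm) has_vector_derivative_within_open) auto
  then show ?thesis
    unfolding split[abs_def] has_real_derivative_iff_has_vector_derivative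
    by (auto intro!: derivative_eq_intros)
qed

lemma continuous_on_Phi: "continuous_on A Phi"
  by (intro continuous_at_imp_continuous_on ballI DERIV_isCont[OF Phi_has_real_derivative])

lemma borel_measurable_Phi [measurable]: "Phi \<in> borel_measurable borel"
  by (rule borel_measurable_continuous_onI[OF continuous_on_Phi])

lemma Phi_minus_has_real_derivative:
  "((\<lambda>z. Phi (- z)) has_real_derivative - std_normal_density z) (at z)"
  using DERIV_chain2[OF Phi_has_real_derivative[of "- z"] DERIV_minus[OF DERIV_ident]]
  by (simp add: std_normal_density_def)

lemma std_normal_density_has_real_derivative:
  "(std_normal_density has_real_derivative - z * std_normal_density z) (at z)"
  unfolding std_normal_density_def[abs_def]
  by (auto intro!: derivative_eq_intros simp: power2_eq_square field_simps)

lemma std_normal_density_le: "std_normal_density x \<le> 1 / sqrt (2 * pi)"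
  by (simp add: std_normal_density_def divide_right_mono)

section \<open>Gaussian integrals\<close>

lemma integral_gauss_vec_component:
  assumes "finite Sc" "j \<in> Sc" "\<forall>i\<in>Sc. 0 < sd i"
    and [measurable]: "(g :: real \<Rightarrow> real) \<in> borel_measurable borel"
  shows "(\<integral>u. g (u j) \<partial>gauss_vec Sc mu sd) = (\<integral>y. g y \<partial>normal_measure (mu j) (sd j))"
proof -
  have "distr (gauss_vec Sc mu sd) (normal_measure (mu j) (sd j)) (\<lambda>u. u j)
      = normal_measure (mu j) (sd j)"
    unfolding gauss_vec_def using assms by (intro distr_PiM_component prob_space_normal_measure) auto
  moreover have "(\<lambda>u. u j) \<in> gauss_vec Sc mu sd \<rightarrow>\<^sub>M normal_measure (mu j) (sd j)"
    unfolding gauss_vec_def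
    using measurable_component_singleton[OF \<open>j \<in> Sc\<close>, of "\<lambda>s. normal_measure (mu s) (sd s)"]
    by simp
  moreover have "g \<in> borel_measurable (normal_measure (mu j) (sd j))"
    by simp
  ultimately show ?thesis
    using integral_distr[of "\<lambda>u. u j" "gauss_vec Sc mu sd" "normal_measure (mu j) (sd j)" g]
    by simp
qed

lemma integral_sign_normal_measure:
  assumes "0 < \<sigma>"
  shows "(\<integral>y. (if 0 \<le> y then 1 else 0) \<partial>normal_measure \<mu> \<sigma>) = Phi (\<mu> / \<sigma>)"
proof -
  interpret prob_space "normal_measure \<mu> \<sigma>"
    using prob_space_normal_measure[OF assms] .
  have "(\<integral>y. (if 0 \<le> y then 1 else 0) \<partial>normal_measure \<mu> \<sigma>)
      = (\<integral>y. indicator {0..} y \<partial>normal_measure \<mu> \<sigma>)"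
    by (intro Bochner_Integration.integral_cong) (auto simp: indicator_def)
  also have "\<dots> = prob {0..}"
    by simp
  also have "\<dots> = Phi (\<mu> / \<sigma>)"
    using measure_normal_measure_atLeast[OF assms, where t = 0] by (simp add: Phi_minus)
  finally show ?thesis .
qed

lemma convolution_normal_measure:
  assumes "0 < \<sigma>" "0 < w"
  shows "normal_measure \<mu> \<sigma> \<star> normal_measure 0 w = normal_measure \<mu> (sqrt (\<sigma>\<^sup>2 + w\<^sup>2))"
proof -
  interpret P: prob_space "normal_measure \<mu> \<sigma>" using prob_space_normal_measure[OF assms(1)] .
  interpret Q: prob_space "normal_measure 0 w" using prob_space_normal_measure[OF assms(2)] .
  have shift: "normal_density \<mu> \<sigma> (x - y) = normal_density 0 \<sigma> ((x - \<mu>) - y)" for x y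
    by (simp add: normal_density_def algebra_simps)
  have "normal_measure \<mu> \<sigma> \<star> normal_measure 0 w = density lborel
      (\<lambda>x. \<integral>\<^sup>+y. ennreal (normal_density \<mu> \<sigma> (x - y)) * ennreal (normal_density 0 w y) \<partial>lborel)"
    by (rule convolution_density) (auto intro: P.finite_measure Q.finite_measure)
  also have "(\<lambda>x. \<integral>\<^sup>+y. ennreal (normal_density \<mu> \<sigma> (x - y)) * ennreal (normal_density 0 w y) \<partial>lborel)
      = (\<lambda>x. \<integral>\<^sup>+y. ennreal (normal_density 0 \<sigma> ((x - \<mu>) - y) * normal_density 0 w y) \<partial>lborel)"
    by (intro ext nn_integral_cong) (simp add: shift ennreal_mult)
  also have "\<dots> = (\<lambda>x. normal_density 0 (sqrt (\<sigma>\<^sup>2 + w\<^sup>2)) (x - \<mu>))"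
    using fun_cong[OF conv_normal_density_zero_mean[OF assms]] by simp
  also have "\<dots> = normal_density \<mu> (sqrt (\<sigma>\<^sup>2 + w\<^sup>2))"
    by (simp add: normal_density_def)
  finally show ?thesis .
qed

text \<open>Phi (x / w) is the probability that x + W >= 0 for W ~ N(0, w^2), so the integral is the
  probability that Y + W >= 0 for independent Y and W.\<close>

lemma integral_Phi_normal_measure:
  assumes "0 < \<sigma>" "0 < w"
  shows "(\<integral>y. Phi (y / w) \<partial>normal_measure \<mu> \<sigma>) = Phi (\<mu> / sqrt (\<sigma>\<^sup>2 + w\<^sup>2))"
proof -
  interpret P: prob_space "normal_measure \<mu> \<sigma>" using prob_space_normal_measure[OF assms(1)] .
  interpret Q: prob_space "normal_measure 0 w" using prob_space_normal_measure[OF assms(2)] .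
  have r: "0 < sqrt (\<sigma>\<^sup>2 + w\<^sup>2)" using assms by (simp add: add_pos_nonneg)
  interpret R: prob_space "normal_measure \<mu> (sqrt (\<sigma>\<^sup>2 + w\<^sup>2))" using prob_space_normal_measure[OF r] .
  have upper: "measure (normal_measure m s) {t..} = Phi ((m - t) / s)" if "0 < s" for m s t
    using measure_normal_measure_atLeast[OF that, where \<mu> = m and t = t] Phi_minus[of "(t - m) / s"]
    by (simp add: minus_divide_left)
  have "(\<integral>\<^sup>+x. ennreal (Phi (x / w)) \<partial>normal_measure \<mu> \<sigma>)
      = (\<integral>\<^sup>+x. emeasure (normal_measure 0 w) {a. a + x \<in> {0..}} \<partial>normal_measure \<mu> \<sigma>)"
  proof (intro nn_integral_cong)
    fix x :: real
    have "{a. a + x \<in> {0..}} = {-x..}" by auto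
    then show "ennreal (Phi (x / w)) = emeasure (normal_measure 0 w) {a. a + x \<in> {0..}}"
      using upper[OF assms(2), of 0 "-x"] by (simp add: Q.emeasure_eq_measure)
  qed
  also have "\<dots> = emeasure (normal_measure \<mu> \<sigma> \<star> normal_measure 0 w) {0..}"
    by (rule convolution_emeasure[symmetric]) (auto intro: P.finite_measure Q.finite_measure)
  also have "\<dots> = ennreal (Phi (\<mu> / sqrt (\<sigma>\<^sup>2 + w\<^sup>2)))"
    using upper[OF r, of \<mu> 0] by (simp add: convolution_normal_measure[OF assms] R.emeasure_eq_measure)
  finally show ?thesis
    by (simp add: integral_eq_nn_integral Phi_nonneg)
qed

lemma nonincreasing_after_dip:
  fixes f f' :: "real \<Rightarrow> real"
  assumes "f 0 = 0"
    and deriv: "\<And>x. 0 \<le> x \<Longrightarrow> (f has_real_derivative f' x) (at x)"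
    and crossing: "\<And>x y. 0 \<le> x \<Longrightarrow> x \<le> y \<Longrightarrow> f' x < 0 \<Longrightarrow> f' y \<le> 0"
    and "0 \<le> x" "x \<le> y" "f x < 0"
  shows "f y \<le> f x"
proof -
  have "0 < x" using assms by (cases "x = 0") auto
  then obtain \<xi> where \<xi>: "0 < \<xi>" "\<xi> < x" "f x - f 0 = (x - 0) * f' \<xi>"
    using MVT2[of 0 x f f'] deriv by auto
  then have "f' \<xi> < 0"
    using \<open>f 0 = 0\<close> \<open>f x < 0\<close> \<open>0 < x\<close> by (simp add: mult_less_0_iff)
  show ?thesis
  proof (rule DERIV_nonpos_imp_nonincreasing[OF \<open>x \<le> y\<close>])
    fix z assume "x \<le> z" "z \<le> y"
    then have "f' z \<le> 0"
      using \<xi> \<open>f' \<xi> < 0\<close> by (intro crossing[of \<xi>]) auto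
    then show "\<exists>d. (f has_real_derivative d) (at z) \<and> d \<le> 0"
      using deriv[of z] \<open>0 \<le> x\<close> \<open>x \<le> z\<close> by auto
  qed
qed

lemma nonneg_if_deriv_crosses_once:
  fixes f f' :: "real \<Rightarrow> real"
  assumes "f 0 = 0" and lim: "(f \<longlongrightarrow> 0) at_top"
    and deriv: "\<And>x. 0 \<le> x \<Longrightarrow> (f has_real_derivative f' x) (at x)"
    and crossing: "\<And>x y. 0 \<le> x \<Longrightarrow> x \<le> y \<Longrightarrow> f' x < 0 \<Longrightarrow> f' y \<le> 0"
    and "0 \<le> x"
  shows "0 \<le> f x"
proof (rule ccontr)
  assume "\<not> 0 \<le> f x"
  then have "\<forall>\<^sub>F y in at_top. f y \<le> f x"
    using nonincreasing_after_dip[OF \<open>f 0 = 0\<close> deriv crossing \<open>0 \<le> x\<close>]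
    by (intro eventually_at_top_linorderI[of x]) auto
  then have "0 \<le> f x"
    by (rule tendsto_upperbound[OF lim]) simp
  with \<open>\<not> 0 \<le> f x\<close> show False by simp
qed

lemma unique_max_of_deriv_sign:
  fixes f f' :: "real \<Rightarrow> real"
  assumes deriv: "\<And>x. (f has_real_derivative f' x) (at x)"
    and up: "\<And>x. 0 \<le> x \<Longrightarrow> x < z \<Longrightarrow> 0 < f' x"
    and down: "\<And>x. z < x \<Longrightarrow> f' x < 0"
    and "0 \<le> y" "y \<noteq> z"
  shows "f y < f z"
proof -
  have cont: "continuous_on A f" for A
    by (intro continuous_at_imp_continuous_on ballI DERIV_isCont[OF deriv])
  show ?thesis
  proof (cases "y < z")
    case True
    show ?thesis
    proof (rule DERIV_pos_imp_increasing_open[OF True _ cont])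
      fix x assume "y < x" "x < z"
      then show "\<exists>d. (f has_real_derivative d) (at x) \<and> 0 < d"
        using deriv up \<open>0 \<le> y\<close> by (intro exI[of _ "f' x"]) auto
    qed
  next
    case False
    with \<open>y \<noteq> z\<close> have "z < y" by simp
    show ?thesis
      by (rule DERIV_neg_imp_decreasing_open[OF \<open>z < y\<close> _ cont]) (use deriv down in auto)
  qed
qed

section \<open>Bounds on the normal distribution function\<close>

lemma Phi_le_linear:
  assumes "0 \<le> x"
  shows "Phi x \<le> 1/2 + x / sqrt (2 * pi)"
proof -
  have "1/2 + 0 / sqrt (2 * pi) - Phi 0 \<le> 1/2 + x / sqrt (2 * pi) - Phi x"
  proof (rule DERIV_nonneg_imp_nondecreasing[OF assms])
    fix y
    show "\<exists>d. ((\<lambda>y. 1/2 + y / sqrt (2 * pi) - Phi y) has_real_derivative d) (at y) \<and> 0 \<le> d"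
      using std_normal_density_le[of y]
      by (intro exI[of _ "1 / sqrt (2 * pi) - std_normal_density y"])
         (auto intro!: derivative_eq_intros Phi_has_real_derivative simp: field_simps)
  qed
  then show ?thesis by (simp add: Phi_0)
qed

lemma ln_gap_stays_negative:
  fixes c x y :: real
  assumes "0 < c" "0 \<le> x" "x \<le> y" "2 * ln (1 + 2 * x / c) < x\<^sup>2 / 2"
  shows "2 * ln (1 + 2 * y / c) < y\<^sup>2 / 2"
proof -
  define f where "f t = 2 * ln (1 + 2 * t / c) - t\<^sup>2 / 2" for t
  define f' where "f' t = 4 / (c + 2 * t) - t" for t
  have deriv: "(f has_real_derivative f' t) (at t)" if "0 \<le> t" for t
    unfolding f_def[abs_def] f'_def using \<open>0 < c\<close> that
    by (auto intro!: derivative_eq_intros simp: field_simps add_pos_nonneg)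
  have "f' t \<le> f' s" if "0 \<le> s" "s \<le> t" for s t
  proof -
    have "4 / (c + 2 * t) \<le> 4 / (c + 2 * s)"
      using \<open>0 < c\<close> that by (intro divide_left_mono) auto
    with that show ?thesis by (simp add: f'_def)
  qed
  then have crossing: "f' t \<le> 0" if "0 \<le> s" "s \<le> t" "f' s < 0" for s t
    using that by fastforce
  have "f y \<le> f x"
    using assms by (intro nonincreasing_after_dip[of f f'] deriv crossing) (auto simp: f_def)
  with assms show ?thesis by (simp add: f_def)
qed

text \<open>The difference of the two sides vanishes at 0 and at infinity, and its derivative has the
  sign of the logarithmic gap of ln_gap_stays_negative, which changes sign at most once.\<close>

lemma Phi_ge_rational:
  assumes "0 \<le> x"
  shows "1/2 + x / (sqrt (2 * pi) + 2 * x) \<le> Phi x"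
proof -
  define c where "c = sqrt (2 * pi)"
  have "0 < c" by (simp add: c_def)
  define h where "h y = Phi y - 1/2 - y / (c + 2 * y)" for y
  define h' where "h' y = (exp (- (y\<^sup>2 / 2)) - exp (- (2 * ln (1 + 2 * y / c)))) / c" for y
  have deriv: "(h has_real_derivative h' y) (at y)" if "0 \<le> y" for y
  proof -
    have pos: "0 < c + 2 * y" using \<open>0 < c\<close> that by simp
    have "0 < 1 + 2 * y / c" using \<open>0 < c\<close> that by (simp add: add_pos_nonneg)
    then have "exp (2 * ln (1 + 2 * y / c)) = (1 + 2 * y / c)\<^sup>2"
      by (metis exp_ln ln_realpow of_nat_numeral zero_less_power)
    then have "exp (- (2 * ln (1 + 2 * y / c))) = (c / (c + 2 * y))\<^sup>2"
      using \<open>0 < c\<close> pos by (simp add: exp_minus power_divide field_simps)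
    then have "h' y = std_normal_density y - c / (c + 2 * y)\<^sup>2"
      using \<open>0 < c\<close> by (simp add: h'_def std_normal_density_def c_def power2_eq_square field_simps)
    moreover have "(h has_real_derivative std_normal_density y - c / (c + 2 * y)\<^sup>2) (at y)"
      unfolding h_def[abs_def] using pos
      by (auto intro!: derivative_eq_intros Phi_has_real_derivative simp: field_simps power2_eq_square)
    ultimately show ?thesis by simp
  qed
  have h'_neg_iff: "h' y < 0 \<longleftrightarrow> 2 * ln (1 + 2 * y / c) < y\<^sup>2 / 2" for y
    using \<open>0 < c\<close> by (simp add: h'_def divide_less_0_iff)
  have crossing: "h' t \<le> 0" if "0 \<le> s" "s \<le> t" "h' s < 0" for s t
    using ln_gap_stays_negative[OF \<open>0 < c\<close> that(1,2)] that(3)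
    unfolding h'_neg_iff[symmetric] by simp
  have "((\<lambda>y. y / (c + 2 * y)) \<longlongrightarrow> 1/2) at_top"
    unfolding c_def by real_asymp
  then have "(h \<longlongrightarrow> 1 - 1/2 - 1/2) at_top"
    unfolding h_def[abs_def] by (intro tendsto_diff Phi_lim_at_top tendsto_const)
  then have "0 \<le> h x"
    by (intro nonneg_if_deriv_crosses_once[of h h'] deriv crossing assms)
       (auto simp: h_def Phi_0)
  then show ?thesis by (simp add: h_def c_def)
qed

text \<open>Phi (- x) - x * std_normal_density x is the derivative of x * Phi (- x).\<close>

lemma Phi_minus_sub_mult_density_has_real_derivative:
  "((\<lambda>x. Phi (- x) - x * std_normal_density x) has_real_derivative (x\<^sup>2 - 2) * std_normal_density x) (at x)"
  by (auto intro!: derivative_eq_intros Phi_minus_has_real_derivative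
      std_normal_density_has_real_derivative simp: algebra_simps power2_eq_square)

lemma Phi_minus_sub_mult_density_neg:
  assumes "sqrt 2 < x"
  shows "Phi (- x) - x * std_normal_density x < 0"
proof -
  have "((\<lambda>x. Phi (- x)) \<longlongrightarrow> 0) at_top"
    using filterlim_compose[OF std_normal.cdf_lim_at_bot filterlim_uminus_at_bot_at_top]
    by (simp add: Phi_eq_cdf)
  moreover have "((\<lambda>x. x * std_normal_density x) \<longlongrightarrow> 0) at_top"
    unfolding std_normal_density_def by real_asymp
  ultimately have "((\<lambda>x. - (Phi (- x) - x * std_normal_density x)) \<longlongrightarrow> 0) at_top"
    using tendsto_minus[OF tendsto_diff] by fastforce
  moreover have "\<exists>d. ((\<lambda>x. - (Phi (- x) - x * std_normal_density x)) has_real_derivative d) (at y) \<and> d < 0"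
    if "x \<le> y" for y
  proof -
    have "2 < y\<^sup>2"
      using power_strict_mono[of "sqrt 2" y 2] assms that by simp
    then show ?thesis
      using DERIV_minus[OF Phi_minus_sub_mult_density_has_real_derivative[of y]]
      by (intro exI conjI) (auto simp: normal_density_pos)
  qed
  ultimately show ?thesis
    using DERIV_neg_imp_decreasing_at_top[of x _ 0] by fastforce
qed

lemma Phi_minus_sub_mult_density_sign_change:
  obtains z where "0 \<le> z"
    and "\<And>x. 0 \<le> x \<Longrightarrow> x < z \<Longrightarrow> 0 < Phi (- x) - x * std_normal_density x"
    and "\<And>x. z < x \<Longrightarrow> Phi (- x) - x * std_normal_density x < 0"
proof -
  define g where "g x = Phi (- x) - x * std_normal_density x" for x
  note deriv = Phi_minus_sub_mult_density_has_real_derivative[folded g_def]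
  note neg = Phi_minus_sub_mult_density_neg[folded g_def]
  have cont: "continuous_on A g" for A
    by (intro continuous_at_imp_continuous_on ballI DERIV_isCont[OF deriv])
  have decr: "g y < g x" if "0 \<le> x" "x < y" "y \<le> sqrt 2" for x y
  proof (rule DERIV_neg_imp_decreasing_open[OF \<open>x < y\<close> _ cont])
    fix t assume "x < t" "t < y"
    then have "t\<^sup>2 < 2"
      using power_strict_mono[of t "sqrt 2" 2] that by simp
    then show "\<exists>d. (g has_real_derivative d) (at t) \<and> d < 0"
      using deriv[of t] by (intro exI conjI) (auto simp: mult_neg_pos normal_density_pos)
  qed
  have "g (sqrt 2 + 1) \<le> 0" "0 \<le> g 0"
    using neg[of "sqrt 2 + 1"] by (auto simp: g_def Phi_0)
  then obtain z where z: "0 \<le> z" "z \<le> sqrt 2 + 1" "g z = 0"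
    using IVT2'[of g "sqrt 2 + 1" 0 0] cont by auto
  then have "z \<le> sqrt 2"
    using neg[of z] by fastforce
  show ?thesis
  proof (rule that[OF \<open>0 \<le> z\<close>])
    show "0 < Phi (- x) - x * std_normal_density x" if "0 \<le> x" "x < z" for x
      using decr[of x z] that z \<open>z \<le> sqrt 2\<close> by (simp add: g_def)
    show "Phi (- x) - x * std_normal_density x < 0" if "z < x" for x
      using decr[of z x] neg[of x] z that by (cases "x \<le> sqrt 2") (auto simp: g_def)
  qed
qed

lemma B_const_maximizes:
  shows "0 \<le> B_const" and "\<And>y. 0 \<le> y \<Longrightarrow> y * Phi (- y) \<le> B_const * Phi (- B_const)"
proof -
  obtain z where "0 \<le> z"
    and up: "\<And>x. 0 \<le> x \<Longrightarrow> x < z \<Longrightarrow> 0 < Phi (- x) - x * std_normal_density x"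
    and down: "\<And>x. z < x \<Longrightarrow> Phi (- x) - x * std_normal_density x < 0"
    using Phi_minus_sub_mult_density_sign_change by blast
  have deriv: "((\<lambda>x. x * Phi (- x)) has_real_derivative Phi (- x) - x * std_normal_density x) (at x)" for x
    by (auto intro!: derivative_eq_intros Phi_minus_has_real_derivative)
  have less: "y * Phi (- y) < z * Phi (- z)" if "0 \<le> y" "y \<noteq> z" for y
    using unique_max_of_deriv_sign[OF deriv up down that] .
  have max: "0 \<le> z \<and> (\<forall>y\<ge>0. y * Phi (- y) \<le> z * Phi (- z))"
    using \<open>0 \<le> z\<close> less by (metis order.strict_implies_order order_refl)
  have "B_const = z"
    unfolding B_const_def
  proof (rule the_equality)
    fix w assume "0 \<le> w \<and> (\<forall>y\<ge>0. y * Phi (- y) \<le> w * Phi (- w))"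
    then show "w = z"
      using less[of w] \<open>0 \<le> z\<close> by force
  qed (rule max)
  with max show "0 \<le> B_const" "\<And>y. 0 \<le> y \<Longrightarrow> y * Phi (- y) \<le> B_const * Phi (- B_const)"
    by auto
qed

section \<open>Regret of a single site\<close>

lemma regret_term_le_B_const:
  assumes "0 < \<sigma>"
  shows "a * ((if 0 \<le> a then 1 else 0) - Phi (a / \<sigma>)) \<le> \<sigma> * B_const"
proof -
  have "a * ((if 0 \<le> a then 1 else 0) - Phi (a / \<sigma>)) = \<sigma> * (\<bar>a\<bar> / \<sigma> * Phi (- (\<bar>a\<bar> / \<sigma>)))"
    using assms by (auto simp: Phi_minus)
  also have "\<dots> \<le> \<sigma> * (B_const * Phi (- B_const))"
    using assms B_const_maximizes(2)[of "\<bar>a\<bar> / \<sigma>"] by (intro mult_left_mono) auto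
  also have "\<dots> \<le> \<sigma> * B_const"
    using assms B_const_maximizes(1) Phi_le_1[of "- B_const"]
    by (intro mult_left_mono mult_left_le) auto
  finally show ?thesis .
qed

text \<open>2 L / sqrt (2 pi) is the largest scale that works: at t = 0 the loss (L + t) (1 - Phi (t / r))
  equals L/2 and has slope 1/2 - L / (r sqrt (2 pi)).\<close>

lemma regret_term_le_half_gap_nonneg:
  assumes "0 < L" "\<bar>a - t\<bar> \<le> L" "0 \<le> t"
  shows "a * ((if 0 \<le> a then 1 else 0) - Phi (t / (2 * L / sqrt (2 * pi)))) \<le> L / 2"
proof -
  define c where "c = sqrt (2 * pi)"
  define x where "x = t * c / (2 * L)"
  have "0 < c" by (simp add: c_def)
  have x: "t / (2 * L / c) = x" "0 \<le> x"
    using assms \<open>0 < c\<close> by (auto simp: x_def)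
  show ?thesis
  proof (cases "0 \<le> a")
    case True
    have "x * (2 * L) = t * c"
      using assms by (simp add: x_def)
    moreover have "0 < c + 2 * x" "0 < L + t"
      using assms \<open>0 < c\<close> x(2) by auto
    ultimately have "x / (c + 2 * x) = t / (2 * (L + t))"
      by (simp add: field_simps)
    then have "1 - Phi x \<le> 1/2 - t / (2 * (L + t))"
      using Phi_ge_rational[OF x(2)] by (simp add: c_def)
    then have "a * (1 - Phi x) \<le> (L + t) * (1/2 - t / (2 * (L + t)))"
      using assms True Phi_le_1[of x] by (intro mult_mono) auto
    also have "\<dots> = L / 2"
      using assms by (simp add: field_simps)
    finally show ?thesis
      using True x by (simp add: c_def)
  next
    case False
    have "Phi x \<le> 1/2 + t / (2 * L)"
      using Phi_le_linear[OF x(2)] assms \<open>0 < c\<close> by (simp add: x_def c_def)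
    then have "- a * Phi x \<le> (L - t) * (1/2 + t / (2 * L))"
      using assms False Phi_nonneg[of x] by (intro mult_mono) auto
    also have "\<dots> = L / 2 - t\<^sup>2 / (2 * L)"
      using assms by (simp add: field_simps power2_eq_square)
    also have "\<dots> \<le> L / 2"
      using assms by simp
    finally show ?thesis
      using False x by (simp add: c_def)
  qed
qed

lemma regret_term_le_half_gap:
  assumes "0 < L" "\<bar>a - t\<bar> \<le> L"
  shows "a * ((if 0 \<le> a then 1 else 0) - Phi (t / (2 * L / sqrt (2 * pi)))) \<le> L / 2"
proof (cases "0 \<le> t")
  case False
  \<comment> \<open>the loss is invariant under (a, t) \<mapsto> (- a, - t)\<close>
  define r where "r = 2 * L / sqrt (2 * pi)"
  have "- a * ((if 0 \<le> - a then 1 else 0) - Phi (- t / r)) \<le> L / 2"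
    using assms False unfolding r_def by (intro regret_term_le_half_gap_nonneg) auto
  then have "- a * ((if 0 \<le> - a then 1 else 0) - (1 - Phi (t / r))) \<le> L / 2"
    by (simp only: minus_divide_left[symmetric] Phi_minus)
  then show ?thesis
    unfolding r_def[symmetric]
    by (cases a "0 :: real" rule: linorder_cases) (auto simp: algebra_simps)
qed (use assms regret_term_le_half_gap_nonneg in auto)

section \<open>The nearest-neighbour threshold rule\<close>

lemma nn_in:
  assumes "finite Sc" "Sc \<noteq> {}"
  shows "nn X Sc s \<in> Sc"
proof -
  let ?f = "\<lambda>i. norm (X s - X i)"
  have "Min (?f ` Sc) \<in> ?f ` Sc"
    using assms by (intro Min_in) auto
  then obtain j where "j \<in> Sc" "?f j = Min (?f ` Sc)"
    by auto
  then have "\<exists>j. j \<in> Sc \<and> (\<forall>i\<in>Sc. ?f j \<le> ?f i)"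
    using assms by auto
  then show ?thesis
    unfolding nn_def by (rule conjunct1[OF LeastI_ex])
qed

text \<open>Off the experiment, Phi (u (j s) / w s) is the probability that u (j s) + W >= 0 for
  independent W ~ N(0, (w s)^2): the sign rule applied to a noisy copy of the estimate at j s.\<close>

definition nn_threshold_rule ::
    "nat set \<Rightarrow> (nat \<Rightarrow> nat) \<Rightarrow> (nat \<Rightarrow> real) \<Rightarrow> (nat \<Rightarrow> real) \<Rightarrow> nat \<Rightarrow> real" where
  "nn_threshold_rule Sc j w u s =
     (if s \<in> Sc then (if 0 \<le> u s then 1 else 0) else Phi (u (j s) / w s))"

lemma integral_nn_threshold_rule_experimental:
  assumes "finite Sc" "s \<in> Sc" "\<forall>i\<in>Sc. 0 < sd i"
  shows "(\<integral>u. nn_threshold_rule Sc j w u s \<partial>gauss_vec Sc mu sd) = Phi (mu s / sd s)"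
proof -
  have "(\<integral>u. nn_threshold_rule Sc j w u s \<partial>gauss_vec Sc mu sd)
      = (\<integral>u. (\<lambda>y. if 0 \<le> y then 1 else 0) (u s) \<partial>gauss_vec Sc mu sd)"
    using assms by (simp add: nn_threshold_rule_def)
  also have "\<dots> = (\<integral>y. (if 0 \<le> y then 1 else 0) \<partial>normal_measure (mu s) (sd s))"
    using assms by (intro integral_gauss_vec_component) auto
  finally show ?thesis
    using assms by (simp add: integral_sign_normal_measure)
qed

lemma integral_nn_threshold_rule_nonexperimental:
  assumes "finite Sc" "s \<notin> Sc" "j s \<in> Sc" "0 < w s" "\<forall>i\<in>Sc. 0 < sd i"
  shows "(\<integral>u. nn_threshold_rule Sc j w u s \<partial>gauss_vec Sc mu sd)
       = Phi (mu (j s) / sqrt ((sd (j s))\<^sup>2 + (w s)\<^sup>2))"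
proof -
  have "(\<integral>u. nn_threshold_rule Sc j w u s \<partial>gauss_vec Sc mu sd)
      = (\<integral>u. (\<lambda>y. Phi (y / w s)) (u (j s)) \<partial>gauss_vec Sc mu sd)"
    using assms by (simp add: nn_threshold_rule_def)
  also have "\<dots> = (\<integral>y. Phi (y / w s) \<partial>normal_measure (mu (j s)) (sd (j s)))"
    using assms by (intro integral_gauss_vec_component) auto
  finally show ?thesis
    using assms by (simp add: integral_Phi_normal_measure)
qed

lemma nn_threshold_rule_in_half_rules:
  assumes "finite Sc" "\<And>s. s \<in> SP - Sc \<Longrightarrow> j s \<in> Sc \<and> 0 < w s"
  shows "nn_threshold_rule Sc j w \<in> half_rules SP Sc"
  unfolding half_rules_def
proof (intro CollectI conjI ballI allI impI)
  fix s assume "s \<in> SP"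
  have "(\<lambda>u. u i) \<in> borel_measurable (Pi\<^sub>M Sc (\<lambda>_. borel))" if "i \<in> Sc" for i
    using measurable_component_singleton[OF that, of "\<lambda>_. borel"] by simp
  then show "(\<lambda>u. nn_threshold_rule Sc j w u s) \<in> borel_measurable (Pi\<^sub>M Sc (\<lambda>_. borel))"
    using assms(2)[of s] \<open>s \<in> SP\<close> unfolding nn_threshold_rule_def
    by (cases "s \<in> Sc") (auto intro!: borel_measurable_if_I measurable_compose[OF _ borel_measurable_Phi]
        borel_measurable_divide borel_measurable_const)
  fix u
  show "0 \<le> nn_threshold_rule Sc j w u s" "nn_threshold_rule Sc j w u s \<le> 1"
    by (auto simp: nn_threshold_rule_def Phi_nonneg Phi_le_1)
next
  fix sd :: "nat \<Rightarrow> real" and s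
  assume "\<forall>i\<in>Sc. 0 < sd i" "s \<in> SP"
  then show "(\<integral>u. nn_threshold_rule Sc j w u s \<partial>gauss_vec Sc (\<lambda>_. 0) sd) = 1/2"
    using assms integral_nn_threshold_rule_experimental integral_nn_threshold_rule_nonexperimental
    by (cases "s \<in> Sc") (auto simp: Phi_0)
qed

lemma regret_nn_threshold_rule_le:
  fixes X :: "nat \<Rightarrow> 'a::euclidean_space" and \<tau> :: "'a \<Rightarrow> real"
  assumes "finite SP" "finite Sc" "\<forall>i\<in>Sc. 0 < \<sigma> i"
    and nonexperimental: "\<And>s. s \<in> SP - Sc \<Longrightarrow> j s \<in> Sc \<and> 0 < w s
        \<and> sqrt ((\<sigma> (j s))\<^sup>2 + (w s)\<^sup>2) = 2 * L s / sqrt (2 * pi)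
        \<and> \<bar>\<tau> (X s) - \<tau> (X (j s))\<bar> \<le> L s"
  shows "regret SP X \<sigma> (nn_threshold_rule Sc j w) Sc \<tau>
      \<le> B_const / real (card SP) * (\<Sum>s\<in>Sc \<inter> SP. \<sigma> s) + 1 / real (card SP) * (\<Sum>s\<in>SP - Sc. L s / 2)"
proof -
  define G where "G = gauss_vec Sc (\<lambda>i. \<tau> (X i)) \<sigma>"
  define loss where "loss s = \<tau> (X s) * ((if 0 \<le> \<tau> (X s) then 1 else 0)
      - (\<integral>u. nn_threshold_rule Sc j w u s \<partial>G))" for s
  have loss_experimental: "loss s \<le> \<sigma> s * B_const" if "s \<in> Sc \<inter> SP" for s
    using that assms integral_nn_threshold_rule_experimental[of Sc s \<sigma>] regret_term_le_B_const[of "\<sigma> s"]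
    by (simp add: loss_def G_def)
  have loss_nonexperimental: "loss s \<le> L s / 2" if "s \<in> SP - Sc" for s
  proof -
    have "0 < sqrt ((\<sigma> (j s))\<^sup>2 + (w s)\<^sup>2)"
      using nonexperimental[OF that] by (intro real_sqrt_gt_zero add_nonneg_pos) auto
    then have "0 < 2 * L s / sqrt (2 * pi)"
      using nonexperimental[OF that] by simp
    then have "0 < L s"
      by (simp add: zero_less_divide_iff)
    then show ?thesis
      using that assms nonexperimental[OF that] integral_nn_threshold_rule_nonexperimental[of Sc s j w \<sigma>]
        regret_term_le_half_gap[of "L s" "\<tau> (X s)" "\<tau> (X (j s))"]
      by (simp add: loss_def G_def)
  qed
  have "(\<Sum>s\<in>SP. loss s) = (\<Sum>s\<in>Sc \<inter> SP. loss s) + (\<Sum>s\<in>SP - Sc. loss s)"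
    using \<open>finite SP\<close> by (metis Int_commute sum.Int_Diff)
  also have "\<dots> \<le> (\<Sum>s\<in>Sc \<inter> SP. \<sigma> s * B_const) + (\<Sum>s\<in>SP - Sc. L s / 2)"
    using loss_experimental loss_nonexperimental by (intro add_mono sum_mono) auto
  finally have "(\<Sum>s\<in>SP. loss s) \<le> B_const * (\<Sum>s\<in>Sc \<inter> SP. \<sigma> s) + (\<Sum>s\<in>SP - Sc. L s / 2)"
    by (simp add: sum_distrib_left mult.commute)
  then have "1 / real (card SP) * (\<Sum>s\<in>SP. loss s)
      \<le> 1 / real (card SP) * (B_const * (\<Sum>s\<in>Sc \<inter> SP. \<sigma> s) + (\<Sum>s\<in>SP - Sc. L s / 2))"
    by (intro mult_left_mono) auto
  then show ?thesis
    by (simp add: regret_def loss_def G_def algebra_simps)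
qed

lemma minimax_regret_le_smoothed:
  fixes X :: "nat \<Rightarrow> 'a::euclidean_space"
  assumes "finite SP" "finite Sc" "Sc \<noteq> {}" "\<forall>i\<in>Sc. 0 < \<sigma> i"
    and w: "\<And>s. s \<in> SP - Sc \<Longrightarrow> 0 < w s \<and>
      sqrt ((\<sigma> (nn X Sc s))\<^sup>2 + (w s)\<^sup>2) = 2 * (C * norm (X s - X (nn X Sc s))) / sqrt (2 * pi)"
  shows "(INF T\<in>half_rules SP Sc. SUP \<tau>\<in>Lip C. ereal (regret SP X \<sigma> T Sc \<tau>))
      \<le> ereal (B_const / real (card SP) * (\<Sum>s\<in>Sc \<inter> SP. \<sigma> s)
          + C / 2 * (1 / real (card SP)) * (\<Sum>s\<in>SP - Sc. norm (X s - X (nn X Sc s))))"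
proof -
  have nn: "nn X Sc s \<in> Sc" for s
    using nn_in assms(2,3) by blast
  have "regret SP X \<sigma> (nn_threshold_rule Sc (nn X Sc) w) Sc \<tau>
      \<le> B_const / real (card SP) * (\<Sum>s\<in>Sc \<inter> SP. \<sigma> s)
        + C / 2 * (1 / real (card SP)) * (\<Sum>s\<in>SP - Sc. norm (X s - X (nn X Sc s)))"
    if "\<tau> \<in> Lip C" for \<tau>
  proof -
    have "\<bar>\<tau> (X s) - \<tau> (X (nn X Sc s))\<bar> \<le> C * norm (X s - X (nn X Sc s))" for s
      using that by (simp add: Lip_def)
    then have "regret SP X \<sigma> (nn_threshold_rule Sc (nn X Sc) w) Sc \<tau>
        \<le> B_const / real (card SP) * (\<Sum>s\<in>Sc \<inter> SP. \<sigma> s)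
          + 1 / real (card SP) * (\<Sum>s\<in>SP - Sc. C * norm (X s - X (nn X Sc s)) / 2)"
      using assms w nn by (intro regret_nn_threshold_rule_le) auto
    then show ?thesis
      by (simp add: sum_distrib_left sum_divide_distrib algebra_simps)
  qed
  moreover have "nn_threshold_rule Sc (nn X Sc) w \<in> half_rules SP Sc"
    using assms w nn by (intro nn_threshold_rule_in_half_rules) auto
  ultimately show ?thesis
    by (intro INF_lower2[of "nn_threshold_rule Sc (nn X Sc) w"] SUP_least) auto
qed

lemma exists_smoothing_scale:
  fixes \<sigma> r :: real
  assumes "0 < \<sigma>" "\<sigma> < r"
  shows "\<exists>w>0. sqrt (\<sigma>\<^sup>2 + w\<^sup>2) = r"
proof -
  have "\<sigma>\<^sup>2 < r\<^sup>2"
    using assms by (intro power_strict_mono) auto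
  then show ?thesis
    using assms by (intro exI[of _ "sqrt (r\<^sup>2 - \<sigma>\<^sup>2)"]) auto
qed

lemma minimax_regret_le:
  fixes X :: "nat \<Rightarrow> 'a::euclidean_space"
  assumes "finite SP" "finite Sc" "Sc \<noteq> {}" "\<forall>i\<in>Sc. 0 < \<sigma> i"
    and distinct: "\<And>s. s \<in> SP - Sc \<Longrightarrow> X s \<noteq> X (nn X Sc s)"
  shows "\<exists>C0. \<forall>C>C0.
      (INF T\<in>half_rules SP Sc. SUP \<tau>\<in>Lip C. ereal (regret SP X \<sigma> T Sc \<tau>))
      \<le> ereal (B_const / real (card SP) * (\<Sum>s\<in>Sc \<inter> SP. \<sigma> s)
          + C / 2 * (1 / real (card SP)) * (\<Sum>s\<in>SP - Sc. norm (X s - X (nn X Sc s))))"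
    (is "\<exists>C0. \<forall>C>C0. ?minimax C \<le> ?bound C")
proof -
  define d where "d s = norm (X s - X (nn X Sc s))" for s
  have \<sigma>_pos: "0 < \<sigma> (nn X Sc s)" for s
    using assms(4) nn_in[OF assms(2,3)] by blast
  \<comment> \<open>C > C0 makes the target scale 2 C d s / sqrt (2 pi) exceed the noise level of site nn X Sc s\<close>
  define C0 where "C0 = (\<Sum>s\<in>SP - Sc. \<sigma> (nn X Sc s) * sqrt (2 * pi) / (2 * d s))"
  have "?minimax C \<le> ?bound C" if "C0 < C" for C
  proof -
    have "\<exists>w>0. sqrt ((\<sigma> (nn X Sc s))\<^sup>2 + w\<^sup>2) = 2 * (C * d s) / sqrt (2 * pi)"
      if "s \<in> SP - Sc" for s
    proof (rule exists_smoothing_scale[OF \<sigma>_pos])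
      have "0 < d s"
        using distinct[OF that] by (simp add: d_def)
      have "\<sigma> (nn X Sc s) * sqrt (2 * pi) / (2 * d s) \<le> C0"
        unfolding C0_def using assms(1) that distinct \<sigma>_pos
        by (intro member_le_sum) (auto simp: d_def intro!: divide_nonneg_pos mult_nonneg_nonneg less_imp_le)
      with \<open>C0 < C\<close> have "\<sigma> (nn X Sc s) * sqrt (2 * pi) / (2 * d s) < C"
        by linarith
      with \<open>0 < d s\<close> show "\<sigma> (nn X Sc s) < 2 * (C * d s) / sqrt (2 * pi)"
        by (simp add: field_simps)
    qed
    then obtain w where "\<And>s. s \<in> SP - Sc \<Longrightarrow> 0 < w s \<and>
        sqrt ((\<sigma> (nn X Sc s))\<^sup>2 + (w s)\<^sup>2) = 2 * (C * d s) / sqrt (2 * pi)"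
      by metis
    then show ?thesis
      using assms unfolding d_def by (intro minimax_regret_le_smoothed[where w = w]) auto
  qed
  then show ?thesis
    by blast
qed

theorem lemma1:
  fixes S :: nat and SE SP :: "nat set" and X :: "nat \<Rightarrow> 'a::euclidean_space"
    and \<sigma> :: "nat \<Rightarrow> real" and k :: nat
  assumes SE_sub: "SE \<subseteq> {1..S}" and SE_card: "card SE \<ge> 2"
    and SP_sub: "SP \<subseteq> {1..S}" and SP_ne: "SP \<noteq> {}"
    and sigma_pos: "\<forall>s\<in>{1..S}. \<sigma> s > 0"
    and A2: "inj_on X {1..S}"
    and k: "1 \<le> k" "k < card SE"
  shows "\<forall>Sc. Sc \<subseteq> SE \<and> card Sc \<le> k \<and> Sc \<noteq> {} \<longrightarrow>
    (\<exists>C0. \<forall>C>C0.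
      (INF T\<in>half_rules SP Sc. SUP \<tau>\<in>Lip C. ereal (regret SP X \<sigma> T Sc \<tau>))
      \<le> ereal (B_const / real (card SP) * (\<Sum>s\<in>Sc \<inter> SP. \<sigma> s)
          + C / 2 * (1 / real (card SP)) * (\<Sum>s\<in>SP - Sc. norm (X s - X (nn X Sc s)))))"
proof -
  have "finite SP"
    using SP_sub by (rule finite_subset) simp
  moreover have finite_Sc: "finite Sc" if "Sc \<subseteq> SE" for Sc
    using that SE_sub by (auto intro: finite_subset)
  moreover have "X s \<noteq> X (nn X Sc s)" if "Sc \<subseteq> SE" "Sc \<noteq> {}" "s \<in> SP - Sc" for Sc s
    using nn_in[OF finite_Sc[OF that(1)] that(2), of X s] that SP_sub SE_sub
    by (metis Diff_iff inj_onD[OF A2] subsetD)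
  ultimately show ?thesis
    using SE_sub sigma_pos by (intro allI impI minimax_regret_le) auto
qed

end
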